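(* Let $G=(V,E)$ be a finite undirected (symmetric) graph with real edge weights, and let $P=\{S_1,\dots,S_n\}$ be a partition of $V$ with $n\ge 2$. Assume minimum spanning forests of all graphs considered here are unique. For $1\le i<j\le n$ let $G[S_i\cup S_j]$ be the subgraph of $G$ induced by $S_i\cup S_j$. Then \[\mathrm{MSF}(G)=\mathrm{MSF}\Big(\bigcup_{1\le i<j\le n}\mathrm{MSF}\big(G[S_i\cup S_j]\big)\Big),\] where the union is the graph on vertex set $V$ whose edge set is the union of the edge sets of the forests $\mathrm{MSF}(G[S_i\cup S_j])$, with edge weights inherited from $G$.
   Context: For a weighted undirected graph $H$, $\mathrm{MSF}(H)$ denotes its minimum spanning forest (a spanning forest consisting of a minimum spanning tree of each connected component of $H$, minimizing total edge weight), regarded as a set of edges. For $S\subseteq V$, $G[S]$ is the induced subgraph on $S$: vertex set $S$ and all edges of $G$ with both endpoints in $S$, with the same weights. *)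

theory Defs
  imports Complex_Main
begin

definition graph :: "'a set \<Rightarrow> 'a set set \<Rightarrow> bool" where
  "graph V E \<longleftrightarrow> finite V \<and> (\<forall>e\<in>E. \<exists>u v. e = {u, v} \<and> u \<noteq> v \<and> u \<in> V \<and> v \<in> V)"

definition connected_in :: "'a set set \<Rightarrow> 'a \<Rightarrow> 'a \<Rightarrow> bool" where
  "connected_in E u v \<longleftrightarrow> (\<lambda>x y. {x, y} \<in> E)\<^sup>*\<^sup>* u v"

text \<open>A forest: no edge lies on a cycle, i.e. removing any edge disconnects its endpoints.\<close>
definition forest :: "'a set set \<Rightarrow> bool" where
  "forest F \<longleftrightarrow> (\<forall>u v. {u, v} \<in> F \<longrightarrow> \<not> connected_in (F - {{u, v}}) u v)"

definition spanning_forest :: "'a set \<Rightarrow> 'a set set \<Rightarrow> 'a set set \<Rightarrow> bool" where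
  "spanning_forest V E F \<longleftrightarrow> F \<subseteq> E \<and> forest F \<and>
     (\<forall>u\<in>V. \<forall>v\<in>V. connected_in E u v \<longrightarrow> connected_in F u v)"

definition is_msf :: "'a set \<Rightarrow> 'a set set \<Rightarrow> ('a set \<Rightarrow> real) \<Rightarrow> 'a set set \<Rightarrow> bool" where
  "is_msf V E w F \<longleftrightarrow> spanning_forest V E F \<and>
     (\<forall>F'. spanning_forest V E F' \<longrightarrow> sum w F \<le> sum w F')"

text \<open>The minimum spanning forest (meaningful when it is unique).\<close>
definition MSF :: "'a set \<Rightarrow> 'a set set \<Rightarrow> ('a set \<Rightarrow> real) \<Rightarrow> 'a set set" where
  "MSF V E w = (THE F. is_msf V E w F)"

definition unique_msf :: "'a set \<Rightarrow> 'a set set \<Rightarrow> ('a set \<Rightarrow> real) \<Rightarrow> bool" where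
  "unique_msf V E w \<longleftrightarrow> (\<exists>!F. is_msf V E w F)"

definition induced_edges :: "'a set set \<Rightarrow> 'a set \<Rightarrow> 'a set set" where
  "induced_edges E S = {e \<in> E. e \<subseteq> S}"

end

theory Submission
  imports Defs
begin

(*
  Let T be the unique minimum spanning forest of G and {u, v} an edge of T. Then {u, v}
  belongs to every minimum spanning forest T' of every subgraph that contains it. Otherwise
  T' joins u and v by a path, and this path must leave the component A of u in T - {u, v}
  through an edge {x, y} whose removal separates u from v in T'. Exchanging {x, y} for
  {u, v} in T' gives w {x, y} <= w {u, v}, while exchanging {u, v} for {x, y} in T gives
  w {u, v} < w {x, y} by uniqueness of T.

  Both endpoints of an edge of T lie in some S i \<union> S j, so T is contained in the union H
  of the pairwise forests. As H is a subgraph of G containing T, T is also a minimum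
  spanning forest of H, and uniqueness for H gives MSF(H) = T.
*)

lemma connected_in_refl [simp]: "connected_in F u u"
  unfolding connected_in_def by simp

lemma connected_in_edge: "{u, v} \<in> F \<Longrightarrow> connected_in F u v"
  unfolding connected_in_def by (rule r_into_rtranclp)

lemma connected_in_trans:
  "connected_in F u v \<Longrightarrow> connected_in F v x \<Longrightarrow> connected_in F u x"
  unfolding connected_in_def by (rule rtranclp_trans)

lemma connected_in_sym: "connected_in F u v \<Longrightarrow> connected_in F v u"
proof -
  have "symp (\<lambda>x y. {x, y} \<in> F)" by (rule sympI) (simp add: insert_commute)
  then show "connected_in F u v \<Longrightarrow> connected_in F v u"
    unfolding connected_in_def by (rule sympD[OF symp_rtranclp])
qed

lemma connected_in_lift:
  assumes "\<And>x y. {x, y} \<in> F \<Longrightarrow> connected_in F' x y" and "connected_in F u v"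
  shows "connected_in F' u v"
proof -
  have "(\<lambda>x y. {x, y} \<in> F)\<^sup>*\<^sup>* \<le> (connected_in F')\<^sup>*\<^sup>*"
    using assms(1) by (intro rtranclp_mono) auto
  then show ?thesis
    using assms(2) unfolding connected_in_def rtranclp_idemp by blast
qed

lemma connected_in_mono: "F \<subseteq> F' \<Longrightarrow> connected_in F u v \<Longrightarrow> connected_in F' u v"
  by (rule connected_in_lift) (auto intro: connected_in_edge)

lemma connected_in_closed:
  assumes "\<And>x y. {x, y} \<in> F \<Longrightarrow> x \<in> A \<Longrightarrow> y \<in> A" "connected_in F u v" "u \<in> A"
  shows "v \<in> A"
  using assms(2,3) unfolding connected_in_def
  by (induction rule: rtranclp_induct) (auto intro: assms(1))

lemma connected_in_insertE:
  assumes "connected_in (insert {a, b} F) u v"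
  obtains "connected_in F u v"
    | "connected_in F u a" "connected_in F b v"
    | "connected_in F u b" "connected_in F a v"
proof -
  have "connected_in F u v \<or> (connected_in F u a \<and> connected_in F b v)
      \<or> (connected_in F u b \<and> connected_in F a v)"
    using assms unfolding connected_in_def
  proof (induction rule: rtranclp_induct)
    case (step y z)
    then have "{y, z} \<in> F \<or> y = a \<and> z = b \<or> y = b \<and> z = a"
      by (auto simp: doubleton_eq_iff)
    with step.IH show ?case
      using connected_in_sym[unfolded connected_in_def]
      by (auto intro: rtranclp.rtrancl_into_rtrancl)
  qed simp
  with that show thesis by blast
qed

lemma forest_connected_in_Diff:
  assumes forest: "forest F" and "finite X"
    and each: "\<forall>f\<in>X. connected_in (F - {f}) u v" and "connected_in F u v"
  shows "connected_in (F - X) u v"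
  using \<open>finite X\<close> each
proof (induction X rule: finite_induct)
  case empty
  then show ?case using \<open>connected_in F u v\<close> by simp
next
  case (insert f X)
  then have IH: "connected_in (F - X) u v" and without_f: "connected_in (F - {f}) u v"
    by auto
  consider "f \<notin> F - X" | a b where "f \<in> F - X" "f = {a, b}" | "\<nexists>a b. f = {a, b}"
    by blast
  then show ?case
  proof cases
    case 1
    then have "F - insert f X = F - X" by auto
    then show ?thesis using IH by simp
  next
    case (2 a b)
    have "F - X = insert {a, b} (F - insert f X)" using 2 by auto
    with IH have "connected_in (insert {a, b} (F - insert f X)) u v" by simp
    moreover have no_ab: "\<not> connected_in (F - {f}) a b" using forest 2 unfolding forest_def by auto
    moreover have mono: "connected_in (F - insert f X) p q \<Longrightarrow> connected_in (F - {f}) p q" for p q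
      by (rule connected_in_mono[rotated]) auto
    ultimately show ?thesis
    proof (elim connected_in_insertE)
      assume "connected_in (F - insert f X) u a" "connected_in (F - insert f X) b v"
      then have "connected_in (F - {f}) a b"
        using mono without_f by (meson connected_in_sym connected_in_trans)
      with no_ab show ?thesis by simp
    next
      assume "connected_in (F - insert f X) u b" "connected_in (F - insert f X) a v"
      then have "connected_in (F - {f}) a b"
        using mono without_f by (meson connected_in_sym connected_in_trans)
      with no_ab show ?thesis by simp
    qed
  next
    case 3
    then have "{x, y} \<in> F - insert f X \<longleftrightarrow> {x, y} \<in> F - X" for x y by blast
    then show ?thesis using IH unfolding connected_in_def by simp
  qed
qed

lemma forest_crossing_bridgeE:
  assumes "forest F" "finite F" "connected_in F u v" "u \<in> A" "v \<notin> A"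
  obtains x y where "{x, y} \<in> F" "x \<in> A" "y \<notin> A" "\<not> connected_in (F - {{x, y}}) u v"
proof -
  define X where "X = {f \<in> F. \<exists>x y. f = {x, y} \<and> x \<in> A \<and> y \<notin> A}"
  have "\<not> connected_in (F - X) u v"
  proof
    assume "connected_in (F - X) u v"
    then have "v \<in> A"
    proof (rule connected_in_closed[rotated])
      fix x y assume "{x, y} \<in> F - X" "x \<in> A"
      then show "y \<in> A" unfolding X_def by blast
    qed (rule \<open>u \<in> A\<close>)
    with \<open>v \<notin> A\<close> show False by simp
  qed
  moreover have "finite X" using \<open>finite F\<close> by (simp add: X_def)
  ultimately obtain f where "f \<in> X" "\<not> connected_in (F - {f}) u v"
    using forest_connected_in_Diff[OF \<open>forest F\<close> _ _ \<open>connected_in F u v\<close>] by blast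
  then show thesis using that unfolding X_def by blast
qed

lemma connected_in_exchange:
  assumes "{x, y} \<in> F" "connected_in F a b" "\<not> connected_in (F - {{x, y}}) a b"
  shows "connected_in (insert {a, b} (F - {{x, y}})) p q \<longleftrightarrow> connected_in F p q"
proof
  assume "connected_in (insert {a, b} (F - {{x, y}})) p q"
  then show "connected_in F p q"
    by (rule connected_in_lift[rotated])
      (auto simp: doubleton_eq_iff intro: connected_in_edge connected_in_sym assms(2))
next
  let ?F' = "insert {a, b} (F - {{x, y}})"
  have F0_F': "connected_in (F - {{x, y}}) s t \<Longrightarrow> connected_in ?F' s t" for s t
    by (rule connected_in_mono[rotated]) auto
  have "connected_in (insert {x, y} (F - {{x, y}})) a b"
    using assms(1,2) by (simp add: insert_absorb)
  then have "connected_in ?F' x y"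
  proof (elim connected_in_insertE)
    assume "connected_in (F - {{x, y}}) a b"
    with assms(3) show ?thesis by simp
  next
    assume "connected_in (F - {{x, y}}) a x" "connected_in (F - {{x, y}}) y b"
    moreover have "connected_in ?F' a b" by (simp add: connected_in_edge)
    ultimately show ?thesis using F0_F' by (meson connected_in_sym connected_in_trans)
  next
    assume "connected_in (F - {{x, y}}) a y" "connected_in (F - {{x, y}}) x b"
    moreover have "connected_in ?F' a b" by (simp add: connected_in_edge)
    ultimately show ?thesis using F0_F' by (meson connected_in_sym connected_in_trans)
  qed
  assume "connected_in F p q"
  then show "connected_in ?F' p q"
  proof (rule connected_in_lift[rotated])
    fix s t assume "{s, t} \<in> F"
    show "connected_in ?F' s t"
    proof (cases "{s, t} = {x, y}")
      case True
      with \<open>connected_in ?F' x y\<close> show ?thesis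
        by (auto simp: doubleton_eq_iff intro: connected_in_sym)
    qed (use \<open>{s, t} \<in> F\<close> in \<open>simp add: connected_in_edge\<close>)
  qed
qed

lemma forest_exchange:
  assumes forest: "forest F" and no_ab: "\<not> connected_in (F - {{x, y}}) a b"
  shows "forest (insert {a, b} (F - {{x, y}}))"
  unfolding forest_def
proof (intro allI impI notI)
  fix p q
  assume pq: "{p, q} \<in> insert {a, b} (F - {{x, y}})"
    and cycle: "connected_in (insert {a, b} (F - {{x, y}}) - {{p, q}}) p q"
  show False
  proof (cases "{p, q} = {a, b}")
    case True
    have "{a, b} \<notin> F - {{x, y}}" using no_ab connected_in_edge by metis
    with True cycle have "connected_in (F - {{x, y}}) p q" by (simp add: insert_Diff_if)
    with True no_ab show False by (auto simp: doubleton_eq_iff dest: connected_in_sym)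
  next
    case False
    with pq have pq_F0: "{p, q} \<in> F - {{x, y}}" by simp
    define H where "H = F - {{x, y}} - {{p, q}}"
    have H_F0: "connected_in H s t \<Longrightarrow> connected_in (F - {{x, y}}) s t" for s t
      by (rule connected_in_mono[rotated]) (auto simp: H_def)
    have "\<not> connected_in H p q"
    proof
      assume "connected_in H p q"
      then have "connected_in (F - {{p, q}}) p q" by (rule connected_in_mono[rotated]) (auto simp: H_def)
      with forest pq_F0 show False unfolding forest_def by auto
    qed
    moreover have "connected_in (insert {a, b} H) p q"
      using cycle False by (simp add: H_def insert_Diff_if Diff_insert2[symmetric])
    moreover have "connected_in (F - {{x, y}}) p q" using pq_F0 by (rule connected_in_edge)
    ultimately have "connected_in (F - {{x, y}}) a b"
      by (elim connected_in_insertE) (use H_F0 in \<open>meson connected_in_sym connected_in_trans\<close>)+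
    with no_ab show False by simp
  qed
qed

lemma spanning_forest_exchange:
  assumes "spanning_forest V E F" "{x, y} \<in> F" "{a, b} \<in> E"
    and "connected_in F a b" "\<not> connected_in (F - {{x, y}}) a b"
  shows "spanning_forest V E (insert {a, b} (F - {{x, y}}))"
  using assms(1,3) forest_exchange[OF _ assms(5)] connected_in_exchange[OF assms(2,4,5)]
  unfolding spanning_forest_def by blast

lemma sum_exchange:
  fixes g :: "'a \<Rightarrow> 'b::ab_group_add"
  assumes "finite F" "f \<in> F" "e \<notin> F - {f}"
  shows "sum g (insert e (F - {f})) = sum g F - g f + g e"
proof -
  have "sum g (insert e (F - {f})) = g e + sum g (F - {f})"
    using assms by (simp add: sum.insert)
  also have "sum g (F - {f}) = sum g F - g f"
    using assms by (simp add: sum_diff1)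
  finally show ?thesis by (simp add: algebra_simps)
qed

lemma graph_finite_edges: "graph V E \<Longrightarrow> finite E"
  unfolding graph_def by (rule finite_subset[of E "Pow V"]) auto

lemma graph_edgeE:
  assumes "graph V E" "e \<in> E"
  obtains a b where "e = {a, b}" "a \<in> V" "b \<in> V"
  using assms unfolding graph_def by blast

lemma graph_edge_endpoints: "graph V E \<Longrightarrow> {x, y} \<in> E \<Longrightarrow> x \<in> V \<and> y \<in> V"
  by (elim graph_edgeE) (auto simp: doubleton_eq_iff)

lemma is_msf_MSF: "unique_msf V E w \<Longrightarrow> is_msf V E w (MSF V E w)"
  unfolding unique_msf_def MSF_def by (rule theI')

lemma MSF_eqI: "unique_msf V E w \<Longrightarrow> is_msf V E w F \<Longrightarrow> MSF V E w = F"
  unfolding unique_msf_def MSF_def by (rule the1_equality)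

lemma msf_exchange_le:
  assumes msf: "is_msf V E w F" and "finite F" "{x, y} \<in> F" "{a, b} \<in> E"
    and "connected_in F a b" "\<not> connected_in (F - {{x, y}}) a b"
  shows "w {x, y} \<le> w {a, b}"
proof -
  have "{a, b} \<notin> F - {{x, y}}" using assms(6) connected_in_edge by metis
  have "spanning_forest V E (insert {a, b} (F - {{x, y}}))"
    using msf spanning_forest_exchange[OF _ assms(3-6)] unfolding is_msf_def by simp
  then have "sum w F \<le> sum w (insert {a, b} (F - {{x, y}}))"
    using msf unfolding is_msf_def by blast
  also have "\<dots> = sum w F - w {x, y} + w {a, b}"
    using sum_exchange[OF assms(2,3) \<open>{a, b} \<notin> F - {{x, y}}\<close>] .
  finally show ?thesis by simp
qed

lemma unique_msf_exchange_less:
  assumes uniq: "unique_msf V E w" and msf: "is_msf V E w F" and "finite F"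
    and "{x, y} \<in> F" "{a, b} \<in> E" "{a, b} \<notin> F"
    and "connected_in F a b" "\<not> connected_in (F - {{x, y}}) a b"
  shows "w {x, y} < w {a, b}"
proof (rule ccontr)
  assume "\<not> w {x, y} < w {a, b}"
  define F' where "F' = insert {a, b} (F - {{x, y}})"
  have "spanning_forest V E F'"
    using msf spanning_forest_exchange[OF _ assms(4,5,7,8)] unfolding is_msf_def F'_def by simp
  moreover have "sum w F' = sum w F - w {x, y} + w {a, b}"
    unfolding F'_def using sum_exchange[OF assms(3,4)] \<open>{a, b} \<notin> F\<close> by blast
  ultimately have "is_msf V E w F'"
    using msf \<open>\<not> w {x, y} < w {a, b}\<close> unfolding is_msf_def by fastforce
  with uniq msf have "F' = F" unfolding unique_msf_def by blast
  with \<open>{a, b} \<notin> F\<close> show False unfolding F'_def by blast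
qed

lemma unique_msf_edge_in_subgraph_msf:
  assumes G: "graph V E" and uniq: "unique_msf V E w" and e: "{u, v} \<in> MSF V E w"
    and T': "is_msf V' E' w T'" and "E' \<subseteq> E" "{u, v} \<in> E'" "u \<in> V'" "v \<in> V'"
  shows "{u, v} \<in> T'"
proof (rule ccontr)
  assume "{u, v} \<notin> T'"
  define T where "T = MSF V E w"
  have T: "is_msf V E w T" unfolding T_def using uniq by (rule is_msf_MSF)
  have "T \<subseteq> E" "T' \<subseteq> E" "forest T" "forest T'"
    using T T' \<open>E' \<subseteq> E\<close> unfolding is_msf_def spanning_forest_def by auto
  then have "finite T" "finite T'"
    using graph_finite_edges[OF G] by (auto intro: finite_subset)
  define A where "A = {z. connected_in (T - {{u, v}}) u z}"
  have "v \<notin> A" using \<open>forest T\<close> e unfolding A_def T_def forest_def by blast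
  have "connected_in T' u v"
    using T' \<open>{u, v} \<in> E'\<close> \<open>u \<in> V'\<close> \<open>v \<in> V'\<close>
    unfolding is_msf_def spanning_forest_def by (blast intro: connected_in_edge)
  then obtain x y where xy: "{x, y} \<in> T'" "x \<in> A" "y \<notin> A"
    and bridge: "\<not> connected_in (T' - {{x, y}}) u v"
    by (rule forest_crossing_bridgeE[OF \<open>forest T'\<close> \<open>finite T'\<close> _ _ \<open>v \<notin> A\<close>])
      (simp add: A_def)
  have "w {x, y} \<le> w {u, v}"
    by (rule msf_exchange_le[OF T' \<open>finite T'\<close> xy(1) \<open>{u, v} \<in> E'\<close> \<open>connected_in T' u v\<close> bridge])
  have "{x, y} \<in> E" using xy(1) T' \<open>E' \<subseteq> E\<close> unfolding is_msf_def spanning_forest_def by blast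
  have not_T0: "\<not> connected_in (T - {{u, v}}) x y"
    using xy(2,3) unfolding A_def by (blast intro: connected_in_trans)
  then have "{x, y} \<notin> T"
    using xy(1) \<open>{u, v} \<notin> T'\<close> by (metis Diff_iff connected_in_edge singletonD)
  have "connected_in T x y"
    using T \<open>{x, y} \<in> E\<close> graph_edge_endpoints[OF G \<open>{x, y} \<in> E\<close>]
    unfolding is_msf_def spanning_forest_def by (blast intro: connected_in_edge)
  have "w {u, v} < w {x, y}"
    using unique_msf_exchange_less[OF uniq T \<open>finite T\<close>] e \<open>{x, y} \<in> E\<close> \<open>{x, y} \<notin> T\<close>
      \<open>connected_in T x y\<close> not_T0
    unfolding T_def by blast
  with \<open>w {x, y} \<le> w {u, v}\<close> show False by simp
qed

lemma is_msf_subgraph: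
  assumes T: "is_msf V E w T" and "T \<subseteq> H" "H \<subseteq> E"
  shows "is_msf V H w T"
proof -
  have T_spans: "connected_in T p q" if "p \<in> V" "q \<in> V" "connected_in E p q" for p q
    using T that unfolding is_msf_def spanning_forest_def by blast
  have H_E: "connected_in H p q \<Longrightarrow> connected_in E p q" for p q
    using \<open>H \<subseteq> E\<close> by (rule connected_in_mono)
  have T_H: "connected_in T p q \<Longrightarrow> connected_in H p q" for p q
    using \<open>T \<subseteq> H\<close> by (rule connected_in_mono)
  have "spanning_forest V H T"
    using T \<open>T \<subseteq> H\<close> T_spans H_E unfolding is_msf_def spanning_forest_def by blast
  moreover have "spanning_forest V E F" if "spanning_forest V H F" for F
    using that \<open>H \<subseteq> E\<close> T_spans T_H unfolding spanning_forest_def by blast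
  ultimately show ?thesis using T unfolding is_msf_def by blast
qed

lemma cover_pairE:
  fixes S :: "nat \<Rightarrow> 'a set"
  assumes "a \<in> (\<Union>i\<in>{1..n}. S i)" "b \<in> (\<Union>i\<in>{1..n}. S i)" "n \<ge> 2"
  obtains i j where "1 \<le> i" "i < j" "j \<le> n" "a \<in> S i \<union> S j" "b \<in> S i \<union> S j"
proof -
  obtain i j where ij: "i \<in> {1..n}" "j \<in> {1..n}" "a \<in> S i" "b \<in> S j"
    using assms(1,2) by blast
  consider "i < j" | "j < i" | "i = j" "i < n" | "i = j" "i = n"
    using ij(1,2) by fastforce
  then show thesis
  proof cases
    case 1 then show ?thesis using that[of i j] ij by auto
  next
    case 2 then show ?thesis using that[of j i] ij by auto
  next
    case 3 then show ?thesis using that[of i n] ij by auto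
  next
    case 4 then show ?thesis using that[of 1 n] ij assms(3) by auto
  qed
qed

lemma MSF_subset_pair_MSFs:
  fixes S :: "nat \<Rightarrow> 'a set"
  assumes G: "graph V E" and "n \<ge> 2" and cover: "(\<Union>i\<in>{1..n}. S i) = V"
    and uniq: "unique_msf V E w"
    and P: "\<And>i j. 1 \<le> i \<Longrightarrow> i < j \<Longrightarrow> j \<le> n \<Longrightarrow>
              is_msf (S i \<union> S j) (induced_edges E (S i \<union> S j)) w (P i j)"
  shows "MSF V E w \<subseteq> \<Union>{P i j | i j. 1 \<le> i \<and> i < j \<and> j \<le> n}"
proof
  fix e assume e: "e \<in> MSF V E w"
  then have "e \<in> E" using is_msf_MSF[OF uniq] unfolding is_msf_def spanning_forest_def by blast
  then obtain a b where ab: "e = {a, b}" "a \<in> V" "b \<in> V" by (rule graph_edgeE[OF G])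
  then have ab_cover: "a \<in> (\<Union>i\<in>{1..n}. S i)" "b \<in> (\<Union>i\<in>{1..n}. S i)"
    using cover by simp_all
  obtain i j where ij: "1 \<le> i" "i < j" "j \<le> n" "a \<in> S i \<union> S j" "b \<in> S i \<union> S j"
    by (rule cover_pairE[OF ab_cover \<open>n \<ge> 2\<close>])
  have "{a, b} \<in> induced_edges E (S i \<union> S j)"
    using \<open>e \<in> E\<close> ab ij unfolding induced_edges_def by simp
  moreover have "induced_edges E (S i \<union> S j) \<subseteq> E" unfolding induced_edges_def by blast
  ultimately have "{a, b} \<in> P i j"
    using unique_msf_edge_in_subgraph_msf[OF G uniq _ P[OF ij(1-3)]] e ab(1) ij(4,5) by blast
  then show "e \<in> \<Union>{P i j | i j. 1 \<le> i \<and> i < j \<and> j \<le> n}" using ab(1) ij(1-3) by blast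
qed

theorem theorem1:
  fixes V :: "'a set" and E :: "'a set set" and w :: "'a set \<Rightarrow> real"
    and S :: "nat \<Rightarrow> 'a set" and n :: nat
  assumes G: "graph V E"
    and n2: "n \<ge> 2"
    and nonempty: "\<forall>i\<in>{1..n}. S i \<noteq> {}"
    and disjoint: "\<forall>i\<in>{1..n}. \<forall>j\<in>{1..n}. i \<noteq> j \<longrightarrow> S i \<inter> S j = {}"
    and cover: "(\<Union>i\<in>{1..n}. S i) = V"
    and uniqG: "unique_msf V E w"
    and uniqPairs: "\<forall>i j. 1 \<le> i \<and> i < j \<and> j \<le> n \<longrightarrow>
                      unique_msf (S i \<union> S j) (induced_edges E (S i \<union> S j)) w"
    and uniqUnion: "unique_msf V
         (\<Union>{MSF (S i \<union> S j) (induced_edges E (S i \<union> S j)) w | i j. 1 \<le> i \<and> i < j \<and> j \<le> n}) w"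
  shows "MSF V E w =
         MSF V (\<Union>{MSF (S i \<union> S j) (induced_edges E (S i \<union> S j)) w | i j. 1 \<le> i \<and> i < j \<and> j \<le> n}) w"
proof -
  define P where "P i j = MSF (S i \<union> S j) (induced_edges E (S i \<union> S j)) w" for i j
  define H where "H = \<Union>{P i j | i j. 1 \<le> i \<and> i < j \<and> j \<le> n}"
  have P: "is_msf (S i \<union> S j) (induced_edges E (S i \<union> S j)) w (P i j)"
    if "1 \<le> i" "i < j" "j \<le> n" for i j
    unfolding P_def using uniqPairs that by (blast intro: is_msf_MSF)
  have "H \<subseteq> E"
  proof
    fix e assume "e \<in> H"
    then obtain i j where "1 \<le> i" "i < j" "j \<le> n" "e \<in> P i j" unfolding H_def by blast
    with P show "e \<in> E" unfolding is_msf_def spanning_forest_def induced_edges_def by blast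
  qed
  moreover have "MSF V E w \<subseteq> H"
    unfolding H_def by (rule MSF_subset_pair_MSFs[OF G n2 cover uniqG P])
  ultimately have "is_msf V H w (MSF V E w)"
    using is_msf_subgraph[OF is_msf_MSF[OF uniqG]] by blast
  then show ?thesis
    using MSF_eqI[OF uniqUnion] unfolding H_def P_def by simp
qed

end
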